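(* Let $a\in\mathbb{Q}$ with $1\le a<4$. Define $b_0=\frac{a+1}{2}$ and $b_{i+1}=\mathrm{approx}\!\left(\frac{a+b_i^2}{2b_i},\,2^{-2^{i+1}-1}\right)$. Define $x:\mathbb{Q}^+\to\mathbb{Q}$ by $x(\varepsilon)=b_n$, where $n$ is the least natural number such that $2^{-2^n}\le\varepsilon$. Then $x$ is a regular function, i.e. $|x(\varepsilon_1)-x(\varepsilon_2)|\le\varepsilon_1+\varepsilon_2$ for all $\varepsilon_1,\varepsilon_2\in\mathbb{Q}^+$.
   Context: $\mathbb{Q}^+$ denotes the strictly positive rationals. For rationals in lowest terms, $\frac{n_1}{d_1}$ is simpler than $\frac{n_2}{d_2}$ if $|n_1|+|d_1|<|n_2|+|d_2|$; every closed rational interval contains a unique simplest rational. For $c\in\mathbb{Q}$, $\varepsilon\in\mathbb{Q}^+$, $\mathrm{approx}(c,\varepsilon)$ is the simplest rational number in $[c-\varepsilon,c+\varepsilon]$. *)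

theory Defs
  imports Main "HOL.Rat"
begin

definition rat_size :: "rat \<Rightarrow> int" where
  "rat_size q = (case quotient_of q of (n, d) \<Rightarrow> \<bar>n\<bar> + \<bar>d\<bar>)"

definition simpler :: "rat \<Rightarrow> rat \<Rightarrow> bool" where
  "simpler p q \<longleftrightarrow> rat_size p < rat_size q"

text \<open>The simplest rational in the closed interval [lo, hi] (unique, per the paper).\<close>
definition simplest_in :: "rat \<Rightarrow> rat \<Rightarrow> rat" where
  "simplest_in lo hi = (THE q. lo \<le> q \<and> q \<le> hi \<and>
      (\<forall>r. lo \<le> r \<and> r \<le> hi \<and> r \<noteq> q \<longrightarrow> simpler q r))"

definition approx :: "rat \<Rightarrow> rat \<Rightarrow> rat" where
  "approx c \<epsilon> = simplest_in (c - \<epsilon>) (c + \<epsilon>)"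

fun sqrt_seq :: "rat \<Rightarrow> nat \<Rightarrow> rat" where
  "sqrt_seq a 0 = (a + 1) / 2"
| "sqrt_seq a (Suc i) =
     approx ((a + (sqrt_seq a i)\<^sup>2) / (2 * sqrt_seq a i)) (1 / 2 ^ (2 ^ (i + 1) + 1))"

definition sqrt_approx :: "rat \<Rightarrow> rat \<Rightarrow> rat" where
  "sqrt_approx a \<epsilon> = sqrt_seq a (LEAST n. 1 / 2 ^ (2 ^ n) \<le> \<epsilon>)"

end

theory Submission
  imports Defs Complex_Main
begin

text \<open>Newton's step \<open>b \<mapsto> (a + b\<^sup>2) / (2 b)\<close> has error \<open>(b - \<surd>a)\<^sup>2 / (2 b) \<ge> 0\<close>. So if
  \<open>b\<^sub>i - \<surd>a \<in> [-E/2, E]\<close> for \<open>E = 1/2^2^i\<close>, the Newton value lies in \<open>[\<surd>a, \<surd>a + E\<^sup>2/2]\<close>,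
  and rounding it to within \<open>E\<^sup>2/2\<close> restores the invariant for \<open>E\<^sup>2 = 1/2^2^(i+1)\<close>. Hence
  \<open>x(\<epsilon>)\<close> is within \<open>\<epsilon>\<close> of \<open>\<surd>a\<close>, and regularity is the triangle inequality.

  That rounding by \<open>approx\<close> stays within its tolerance needs the simplest rational of an
  interval to exist, i.e. a rational of minimal size to be unique: two distinct positive
  rationals \<open>p\<^sub>1/q\<^sub>1 < p\<^sub>2/q\<^sub>2\<close> of equal size \<open>m\<close> enclose a simpler one, found from the
  Farey successor of \<open>p\<^sub>1/m\<close>.\<close>

lemma rat_size_ge_1: "1 \<le> rat_size q"
proof -
  obtain n d where "quotient_of q = (n, d)" by force
  with quotient_of_denom_pos show ?thesis by (fastforce simp: rat_size_def)
qed

lemma rat_size_0 [simp]: "rat_size 0 = 1"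
  by (simp add: rat_size_def)

lemma rat_size_eq_1_iff: "rat_size q = 1 \<longleftrightarrow> q = 0"
proof
  obtain n d where q: "quotient_of q = (n, d)" by force
  assume "rat_size q = 1"
  with quotient_of_denom_pos[OF q] have "n = 0" by (simp add: rat_size_def q)
  then show "q = 0" using quotient_of_div[OF q] by simp
qed simp

lemma rat_size_minus: "rat_size (- q) = rat_size q"
  by (simp add: rat_size_def rat_uminus_code split: prod.splits)

lemma rat_size_quotient_le:
  assumes "0 < s"
  shows "rat_size (of_int r / of_int s) \<le> \<bar>r\<bar> + s"
proof -
  have g: "1 \<le> gcd r s" using assms by (simp add: int_one_le_iff_zero_less)
  have div_le: "\<bar>x div gcd r s\<bar> \<le> \<bar>x\<bar>" if "gcd r s dvd x" for x :: int
  proof -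
    have "\<bar>x div gcd r s\<bar> * 1 \<le> \<bar>x div gcd r s\<bar> * gcd r s" using g by (intro mult_left_mono) auto
    also have "\<dots> = \<bar>x div gcd r s * gcd r s\<bar>" using g by (simp add: abs_mult)
    also have "\<dots> = \<bar>x\<bar>" using that by simp
    finally show ?thesis by simp
  qed
  have "quotient_of (of_int r / of_int s) = Rat.normalize (r, s)"
    by (simp flip: Fract_of_int_quotient add: quotient_of_Fract)
  with assms div_le[of r] div_le[of s] show ?thesis
    by (simp add: rat_size_def Rat.normalize_def Let_def)
qed

lemma farey_successor:
  fixes p m :: int
  assumes "0 < p" "p + 1 < m" "coprime p m"
  obtains c d where "0 < c" "c < d" "d < m" "m * c = p * d + 1"
proof -
  obtain u v where uv: "u * p + v * m = 1"
    using bezout_int[of p m] assms(3) by auto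
  define d where "d = (- u) mod m"
  have d: "0 \<le> d" "d < m" using assms by (simp_all add: d_def)
  have "(p * d + 1) mod m = (p * (- u) + 1) mod m"
    unfolding d_def by (metis mod_add_left_eq mod_mult_right_eq)
  also have "p * (- u) + 1 = m * v" using uv by (simp add: algebra_simps)
  finally obtain c where c: "p * d + 1 = m * c" by (auto simp: mod_eq_0_iff_dvd)
  have "d \<noteq> 0"
    using c assms by (auto simp: zmult_eq_1_iff)
  with d have "1 \<le> d" by simp
  have "p * d \<le> (m - 2) * d" using assms d by (intro mult_right_mono) auto
  with c \<open>1 \<le> d\<close> have "m * c < m * d" by (simp add: algebra_simps)
  then have "c < d" using assms by simp
  have "0 < m * c" unfolding c[symmetric] using assms d by simp
  then have "0 < c" using assms by (simp add: zero_less_mult_iff)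
  with \<open>c < d\<close> d c show ?thesis using that by presburger
qed

lemma exists_simpler_between_pos:
  fixes x y :: rat
  assumes "0 < x" "x < y" "rat_size x = rat_size y"
  shows "\<exists>z. x < z \<and> z \<le> y \<and> rat_size z < rat_size x"
proof -
  obtain p1 q1 where qx: "quotient_of x = (p1, q1)" by force
  obtain p2 q2 where qy: "quotient_of y = (p2, q2)" by force
  note q1 = quotient_of_denom_pos[OF qx] and q2 = quotient_of_denom_pos[OF qy]
  have x: "x = of_int p1 / of_int q1" and y: "y = of_int p2 / of_int q2"
    using qx qy by (simp_all add: quotient_of_div)
  have p1: "0 < p1" using assms(1) q1 by (simp add: x zero_less_divide_iff)
  have "0 < y" using assms by simp
  then have p2: "0 < p2" using q2 by (simp add: y zero_less_divide_iff)
  define m where "m = p1 + q1"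
  have m: "m = p2 + q2" using assms(3) p1 p2 q1 q2 by (simp add: m_def rat_size_def qx qy)
  have "p1 * q2 < p2 * q1" using assms(2) q1 q2 by (simp add: x y field_simps flip: of_int_mult)
  moreover have "p1 * m = p1 * p2 + p1 * q2" by (simp add: m algebra_simps)
  moreover have "p2 * m = p1 * p2 + p2 * q1" by (simp add: m_def algebra_simps)
  ultimately have "p1 * m < p2 * m" by linarith
  have "p1 < p2" using \<open>p1 * m < p2 * m\<close> p1 q1 by (simp add: m_def)
  have "coprime p1 m"
    using quotient_of_coprime[OF qx] by (simp add: m_def coprime_iff_gcd_eq_1)
  moreover have "p1 + 1 < m" using \<open>p1 < p2\<close> q2 m by simp
  ultimately obtain c d where cd: "0 < c" "c < d" "d < m" "m * c = p1 * d + 1"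
    using farey_successor p1 by blast
  \<comment> \<open>\<open>t \<mapsto> t / (1 + t)\<close> maps \<open>x < y\<close> to \<open>p1/m < p2/m\<close>; the Farey successor \<open>c/d\<close> of \<open>p1/m\<close>
      lies in between, and \<open>c/(d - c)\<close> is its preimage\<close>
  have "p1 * d < m * c" using cd by simp
  have "m * c \<le> (p1 + 1) * d" using cd by (simp add: algebra_simps)
  also have "\<dots> \<le> p2 * d" using cd \<open>p1 < p2\<close> by (intro mult_right_mono) auto
  finally have "m * c \<le> p2 * d" .
  let ?z = "of_int c / of_int (d - c) :: rat"
  have "x < ?z" using q1 cd \<open>p1 * d < m * c\<close>
    by (simp add: x m_def field_simps flip: of_int_mult of_int_diff)
  moreover have "?z \<le> y" using q2 cd \<open>m * c \<le> p2 * d\<close>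
    by (simp add: y m field_simps flip: of_int_mult of_int_diff)
  moreover have "rat_size ?z < rat_size x"
    using rat_size_quotient_le[of "d - c" c] cd p1 q1 by (simp add: rat_size_def qx m_def)
  ultimately show ?thesis by blast
qed

lemma exists_simpler_between:
  fixes x y :: rat
  assumes "x < y" "rat_size x = rat_size y"
  shows "\<exists>z. x \<le> z \<and> z \<le> y \<and> rat_size z < rat_size x"
proof (cases "0 < x")
  case True
  with exists_simpler_between_pos[OF True assms] show ?thesis by (auto intro: less_imp_le)
next
  case x: False
  show ?thesis
  proof (cases "y < 0")
    case True
    with assms obtain z where "- y < z" "z \<le> - x" "rat_size z < rat_size (- y)"
      using exists_simpler_between_pos[of "- y" "- x"] by (auto simp: rat_size_minus)
    with assms show ?thesis
      by (intro exI[of _ "- z"]) (auto simp: rat_size_minus)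
  next
    case False
    have "rat_size x \<noteq> 1" using assms rat_size_eq_1_iff[of x] rat_size_eq_1_iff[of y] by auto
    with rat_size_ge_1[of x] have "rat_size 0 < rat_size x" by simp
    with x False show ?thesis by (intro exI[of _ 0]) auto
  qed
qed

lemma simplest_in_bounds:
  assumes "lo \<le> hi"
  shows "lo \<le> simplest_in lo hi \<and> simplest_in lo hi \<le> hi"
proof -
  obtain q where q: "lo \<le> q" "q \<le> hi"
    and q_least: "\<And>r. lo \<le> r \<Longrightarrow> r \<le> hi \<Longrightarrow> nat (rat_size q) \<le> nat (rat_size r)"
    using ex_has_least_nat[of "\<lambda>q. lo \<le> q \<and> q \<le> hi" lo "\<lambda>q. nat (rat_size q)"] assms by auto
  have q_minimal: "rat_size q \<le> rat_size r" if "lo \<le> r" "r \<le> hi" for r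
    using q_least[OF that] rat_size_ge_1[of q] by simp
  have simpler_q: "simpler q r" if r: "lo \<le> r" "r \<le> hi" "r \<noteq> q" for r
  proof (rule ccontr)
    assume "\<not> simpler q r"
    with q_minimal[OF r(1,2)] have eq: "rat_size r = rat_size q" by (simp add: simpler_def)
    from \<open>r \<noteq> q\<close> consider "q < r" | "r < q" by linarith
    then have "\<exists>z. lo \<le> z \<and> z \<le> hi \<and> rat_size z < rat_size q"
    proof cases
      case 1
      with exists_simpler_between[OF 1 eq[symmetric]] q r show ?thesis by (meson order_trans)
    next
      case 2
      with exists_simpler_between[OF 2 eq] q r eq show ?thesis by (metis order_trans)
    qed
    with q_minimal show False by fastforce
  qed
  have "simplest_in lo hi = q"
    unfolding simplest_in_def
  proof (rule the_equality)
    fix p assume p: "lo \<le> p \<and> p \<le> hi \<and> (\<forall>r. lo \<le> r \<and> r \<le> hi \<and> r \<noteq> p \<longrightarrow> simpler p r)"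
    show "p = q"
    proof (rule ccontr)
      assume "p \<noteq> q"
      with p q simpler_q show False by (fastforce simp: simpler_def)
    qed
  qed (use q simpler_q in auto)
  with q show ?thesis by simp
qed

lemma approx_error:
  assumes "0 \<le> e"
  shows "\<bar>approx c e - c\<bar> \<le> e"
  using simplest_in_bounds[of "c - e" "c + e"] assms by (simp add: approx_def abs_le_iff)

lemma newton_step_error:
  fixes s b E :: "'a::linordered_field"
  assumes s: "1 \<le> s" and lo: "- E / 2 \<le> b - s" and hi: "b - s \<le> E" and E: "E \<le> 1 / 2"
  shows "0 \<le> (s\<^sup>2 + b\<^sup>2) / (2 * b) - s \<and> (s\<^sup>2 + b\<^sup>2) / (2 * b) - s \<le> E\<^sup>2 / 2"
proof -
  have "3 / 4 \<le> b" using assms by (simp add: field_simps)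
  then have b: "0 < b" by (rule less_le_trans[rotated]) simp
  have err: "(s\<^sup>2 + b\<^sup>2) / (2 * b) - s = (b - s)\<^sup>2 / (2 * b)"
    using b by (simp add: field_simps power2_eq_square)
  have "(b - s)\<^sup>2 / (2 * b) \<le> E\<^sup>2 / 2"
  proof (cases "s \<le> b")
    case True
    have "(b - s)\<^sup>2 / (2 * b) \<le> (b - s)\<^sup>2 / 2" using True s by (intro divide_left_mono) auto
    also have "\<dots> \<le> E\<^sup>2 / 2" using True hi by (intro divide_right_mono power_mono) auto
    finally show ?thesis .
  next
    case False
    \<comment> \<open>below the root the error is at most \<open>E/2\<close>, which makes up for \<open>b < 1\<close>\<close>
    have "(b - s)\<^sup>2 / (2 * b) \<le> (b - s)\<^sup>2 / 1" using \<open>3 / 4 \<le> b\<close> by (intro divide_left_mono) auto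
    also have "\<dots> = (s - b)\<^sup>2" by (simp add: power2_commute)
    also have "\<dots> \<le> (E / 2)\<^sup>2" using False lo by (intro power_mono) auto
    also have "\<dots> \<le> E\<^sup>2 / 2" by (simp add: power_divide)
    finally show ?thesis .
  qed
  with b show ?thesis unfolding err by simp
qed

lemma sqrt_seq_error:
  fixes a :: rat
  assumes "1 \<le> a" "a < 4"
  shows "- (1 / 2 ^ 2 ^ i) / 2 \<le> of_rat (sqrt_seq a i) - sqrt (of_rat a)
    \<and> of_rat (sqrt_seq a i) - sqrt (of_rat a) \<le> (1 / 2 ^ 2 ^ i :: real)"
proof (induction i)
  case 0
  define s where "s = sqrt (of_rat a)"
  have s: "1 \<le> s" "s\<^sup>2 = of_rat a"
    using assms of_rat_less_eq[of 1 a] by (simp_all add: s_def)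
  have "s\<^sup>2 < 2\<^sup>2" using assms of_rat_less[of a 4, where 'a=real] by (simp add: s(2))
  then have "s < 2" by (rule power_less_imp_less_base) simp
  have "of_rat (sqrt_seq a 0) - s = (s - 1)\<^sup>2 / 2"
    by (simp add: s(2)[symmetric] of_rat_add of_rat_divide power2_eq_square field_simps)
  moreover have "(s - 1)\<^sup>2 \<le> 1" using s \<open>s < 2\<close> by (simp add: abs_square_le_1)
  ultimately have "- 1 / 4 \<le> of_rat (sqrt_seq a 0) - s \<and> of_rat (sqrt_seq a 0) - s \<le> 1 / 2"
    using zero_le_power2[of "s - 1"] by linarith
  then show ?case by (simp add: s_def)
next
  case (Suc i)
  define s where "s = sqrt (of_rat a)"
  define E :: real where "E = 1 / 2 ^ 2 ^ i"
  define b where "b = sqrt_seq a i"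
  define N where "N = (a + b\<^sup>2) / (2 * b)"
  have s: "1 \<le> s" "s\<^sup>2 = of_rat a"
    using assms of_rat_less_eq[of 1 a] by (simp_all add: s_def)
  have "(2::real) ^ 1 \<le> 2 ^ 2 ^ i" by (rule power_increasing) simp_all
  then have "E \<le> 1 / 2" by (simp add: E_def field_simps)
  moreover have "- E / 2 \<le> of_rat b - s" "of_rat b - s \<le> E"
    using Suc.IH by (simp_all add: E_def b_def s_def)
  moreover have "of_rat N = (s\<^sup>2 + (of_rat b)\<^sup>2) / (2 * of_rat b)"
    by (simp add: N_def s(2) of_rat_add of_rat_divide of_rat_mult of_rat_power)
  ultimately have newton: "0 \<le> of_rat N - s \<and> of_rat N - s \<le> E\<^sup>2 / 2"
    using newton_step_error[OF s(1)] by simp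
  have "\<bar>sqrt_seq a (Suc i) - N\<bar> \<le> 1 / 2 ^ (2 ^ (i + 1) + 1)"
    using approx_error by (simp add: N_def b_def)
  then have "\<bar>of_rat (sqrt_seq a (Suc i)) - of_rat N\<bar> \<le> (of_rat (1 / 2 ^ (2 ^ (i + 1) + 1)) :: real)"
    by (simp flip: of_rat_diff add: of_rat_less_eq)
  also have "\<dots> = E\<^sup>2 / 2"
    by (simp add: E_def of_rat_divide of_rat_mult of_rat_power power_add power_divide mult.commute flip: power_mult)
  finally have rounding: "\<bar>of_rat (sqrt_seq a (Suc i)) - of_rat N\<bar> \<le> E\<^sup>2 / 2" .
  moreover have "1 / 2 ^ 2 ^ Suc i = E\<^sup>2"
    by (simp add: E_def power_divide flip: power_mult)
  moreover have "- E\<^sup>2 / 2 \<le> of_rat (sqrt_seq a (Suc i)) - s" "of_rat (sqrt_seq a (Suc i)) - s \<le> E\<^sup>2"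
    using rounding newton unfolding abs_le_iff by linarith+
  ultimately show ?case by (simp only: s_def)
qed

lemma ex_inverse_two_power_two_power_le:
  fixes e :: "'a::archimedean_field"
  assumes "0 < e"
  shows "\<exists>n. 1 / 2 ^ 2 ^ n \<le> e"
proof -
  obtain n where n: "inverse (of_nat (Suc n)) < e" using reals_Archimedean[OF assms] by blast
  have "Suc n \<le> 2 ^ 2 ^ n"
    using less_exp[of n] less_exp[of "2 ^ n"] by linarith
  then have "of_nat (Suc n) \<le> (2 ^ 2 ^ n :: 'a)"
    by (metis of_nat_le_iff of_nat_numeral of_nat_power)
  then have "1 / 2 ^ 2 ^ n \<le> inverse (of_nat (Suc n) :: 'a)"
    by (metis inverse_eq_divide le_imp_inverse_le of_nat_0_less_iff zero_less_Suc)
  with n show ?thesis by (blast intro: order_trans less_imp_le)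
qed

lemma sqrt_approx_error:
  fixes a e :: rat
  assumes "1 \<le> a" "a < 4" "0 < e"
  shows "\<bar>of_rat (sqrt_approx a e) - sqrt (of_rat a)\<bar> \<le> (of_rat e :: real)"
proof -
  define n where "n = (LEAST n. 1 / 2 ^ 2 ^ n \<le> e)"
  have "1 / 2 ^ 2 ^ n \<le> e"
    unfolding n_def by (rule LeastI_ex[OF ex_inverse_two_power_two_power_le[OF assms(3)]])
  then have "1 / 2 ^ 2 ^ n \<le> (of_rat e :: real)"
    using of_rat_less_eq[of "1 / 2 ^ 2 ^ n" e] by (simp add: of_rat_divide of_rat_power)
  moreover have "\<bar>of_rat (sqrt_seq a n) - sqrt (of_rat a)\<bar> \<le> (1 / 2 ^ 2 ^ n :: real)"
    using sqrt_seq_error[OF assms(1,2), of n] by (auto simp: abs_le_iff)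
  ultimately show ?thesis by (simp add: sqrt_approx_def n_def)
qed

theorem theorem38:
  fixes a :: rat
  assumes "1 \<le> a" and "a < 4"
  shows "\<forall>\<epsilon>1 \<epsilon>2. 0 < \<epsilon>1 \<longrightarrow> 0 < \<epsilon>2 \<longrightarrow>
           \<bar>sqrt_approx a \<epsilon>1 - sqrt_approx a \<epsilon>2\<bar> \<le> \<epsilon>1 + \<epsilon>2"
proof (intro allI impI)
  fix e1 e2 :: rat
  assume "0 < e1" "0 < e2"
  then have "\<bar>of_rat (sqrt_approx a e1) - of_rat (sqrt_approx a e2)\<bar> \<le> (of_rat e1 + of_rat e2 :: real)"
    using sqrt_approx_error[OF assms \<open>0 < e1\<close>] sqrt_approx_error[OF assms \<open>0 < e2\<close>]
    unfolding abs_le_iff by linarith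
  then have "of_rat \<bar>sqrt_approx a e1 - sqrt_approx a e2\<bar> \<le> (of_rat (e1 + e2) :: real)"
    by (simp flip: of_rat_diff of_rat_add)
  then show "\<bar>sqrt_approx a e1 - sqrt_approx a e2\<bar> \<le> e1 + e2"
    by (simp only: of_rat_less_eq)
qed

end
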